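(* Let $c\ge 0$, $m\ge 2$, and let $x=((x^1,n_1),\dots,(x^q,n_q))$ be a non-convergent Nash equilibrium of the best-worst rule $s=(c,m)$. Then $n_i\le 2$ for every $i\in[q]$, and $n_1=n_q=2$. In particular, for $m=3$ no non-convergent Nash equilibrium exists.
   Context: Setting: voters' ideal points are distributed uniformly (unit mass, Lebesgue measure) on $[0,1]$. There are $m$ candidates; a profile is $x=(x_1,\dots,x_m)\in[0,1]^m$. A voter with ideal point $y$ ranks candidates by distance $|x_i-y|$ (closer is better); ties are broken by a fair lottery (uniformly random strict order among tied candidates). Under the best-worst rule $s=(c,m)$ ($c\ge0$), a candidate receives $1$ point from each voter ranking her first, $-c$ from each voter ranking her last ($m$-th), and $0$ otherwise; $v_i(x)$ is candidate $i$'s expected total points. A (pure-strategy Nash) equilibrium is a profile $x^*$ with $v_i(x^* )\ge v_i(t,x^*_{-i})$ for all $i$ and $t\in[0,1]$ ($(t,x_{-i})$ is $x$ with $x_i$ replaced by $t$); it is non-convergent if at least two platforms are distinct. $[n]=\{1,\dots,n\}$. A profile determines its distinct occupied positions $x^1<\dots<x^q$, with $n_j$ the number of candidates at $x^j$; we write $x=((x^1,n_1),\dots,(x^q,n_q))$. *)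

theory Defs
  imports "HOL-Analysis.Analysis"
begin

(* Candidates are indexed 0..m-1; a profile is x :: nat => real (only x 0..x (m-1) matter). *)

definition closest_set :: "nat \<Rightarrow> (nat \<Rightarrow> real) \<Rightarrow> real \<Rightarrow> nat set" where
  "closest_set m x y = {j. j < m \<and> (\<forall>k<m. \<bar>x j - y\<bar> \<le> \<bar>x k - y\<bar>)}"

definition farthest_set :: "nat \<Rightarrow> (nat \<Rightarrow> real) \<Rightarrow> real \<Rightarrow> nat set" where
  "farthest_set m x y = {j. j < m \<and> (\<forall>k<m. \<bar>x k - y\<bar> \<le> \<bar>x j - y\<bar>)}"

(* probability (under fair tie-breaking lottery) that voter y ranks candidate i first / last *)
definition first_prob :: "nat \<Rightarrow> (nat \<Rightarrow> real) \<Rightarrow> nat \<Rightarrow> real \<Rightarrow> real" where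
  "first_prob m x i y = (if i \<in> closest_set m x y then 1 / real (card (closest_set m x y)) else 0)"

definition last_prob :: "nat \<Rightarrow> (nat \<Rightarrow> real) \<Rightarrow> nat \<Rightarrow> real \<Rightarrow> real" where
  "last_prob m x i y = (if i \<in> farthest_set m x y then 1 / real (card (farthest_set m x y)) else 0)"

(* expected score v_i(x) under the best-worst rule s = (c,m), voters uniform on [0,1] *)
definition bw_score :: "real \<Rightarrow> nat \<Rightarrow> (nat \<Rightarrow> real) \<Rightarrow> nat \<Rightarrow> real" where
  "bw_score c m x i = (LINT y:{0..1}|lborel. first_prob m x i y - c * last_prob m x i y)"

definition is_profile :: "nat \<Rightarrow> (nat \<Rightarrow> real) \<Rightarrow> bool" where
  "is_profile m x \<longleftrightarrow> (\<forall>i<m. x i \<in> {0..1})"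

definition bw_nash_eq :: "real \<Rightarrow> nat \<Rightarrow> (nat \<Rightarrow> real) \<Rightarrow> bool" where
  "bw_nash_eq c m x \<longleftrightarrow> is_profile m x \<and>
     (\<forall>i<m. \<forall>t\<in>{0..1}. bw_score c m (x(i := t)) i \<le> bw_score c m x i)"

definition non_convergent :: "nat \<Rightarrow> (nat \<Rightarrow> real) \<Rightarrow> bool" where
  "non_convergent m x \<longleftrightarrow> (\<exists>i<m. \<exists>j<m. x i \<noteq> x j)"

definition mult_at :: "nat \<Rightarrow> (nat \<Rightarrow> real) \<Rightarrow> real \<Rightarrow> nat" where
  "mult_at m x p = card {i. i < m \<and> x i = p}"

end

theory Submission
  imports Defs
begin

text \<open>
  A candidate's score is the length of the set of voters ranking her position strictly first,
  minus c times the length of the set ranking it strictly last, shared equally among the N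
  candidates at that position. For a position p strictly inside the profile, with neighbouring
  positions a < p < b, this is (b - a) / (2N); if N \<ge> 2, a member of the cohort who moves alone
  into (a, p) or (p, b) obtains (p - a) / 2 or (b - p) / 2, and adding both bounds gives N \<le> 2.
  At the leftmost position a lone candidate strictly gains by moving towards her neighbour, so
  N \<ge> 2 there. If N \<ge> 3 and the score there is S / N, moving alone right into the gap yields
  half the gap and moving alone slightly to the left yields almost all the remaining first
  places; together these deviations are worth almost S, yet each is at most S / N \<le> S / 3.
  The rightmost position follows by the reflection y \<mapsto> 1 - y, and two extreme cohorts of
  size two need m \<ge> 4.
\<close>

lemma set_integral_step_function:
  fixes f :: "real \<Rightarrow> real"
  assumes inside: "\<And>y. y \<in> {0..1} \<Longrightarrow> u < y \<Longrightarrow> y < v \<Longrightarrow> f y = K"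
    and outside: "\<And>y. y \<in> {0..1} \<Longrightarrow> y < u \<or> v < y \<Longrightarrow> f y = 0"
  shows "set_integrable lborel {0..1} f"
    and "(LINT y:{0..1}|lborel. f y) = K * measure lborel ({u<..<v} \<inter> {0..1})"
proof -
  let ?I = "{u<..<v} \<inter> {0..1::real}" and ?U = "{u} \<inter> {0..1::real}"
    and ?V = "({v} - {u}) \<inter> {0..1::real}"
  \<comment> \<open>Exact pointwise decomposition, so no measurability of f is needed.\<close>
  have split: "indicator {0..1} y *\<^sub>R f y
      = K * indicator ?I y + f u * indicator ?U y + f v * indicator ?V y" for y
    using inside outside
    by (cases "y \<in> {0..1}"; cases "y = u"; cases "y = v"; auto simp: indicator_def)
  have finite: "emeasure lborel S < \<infinity>" if "S \<subseteq> {0..1}" for S :: "real set"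
    using emeasure_mono[OF that, of lborel] by (simp add: order_le_less_trans[of _ 1])
  have "integrable lborel (indicator S :: real \<Rightarrow> real)"
    if "S \<in> sets lborel" "S \<subseteq> {0..1}" for S
    using that finite by (intro integrable_real_indicator) auto
  then have int: "integrable lborel (indicator ?I :: real \<Rightarrow> real)"
      "integrable lborel (indicator ?U :: real \<Rightarrow> real)"
      "integrable lborel (indicator ?V :: real \<Rightarrow> real)"
    by auto
  have "measure lborel S = 0" if "S \<subseteq> {w}" for S and w :: real
    using that by (auto simp: subset_singleton_iff)
  then have null: "measure lborel ?U = 0" "measure lborel ?V = 0"
    by (metis Int_lower1, metis Int_lower1 Diff_subset order_trans)
  show "set_integrable lborel {0..1} f"
    unfolding set_integrable_def split using int by simp
  show "(LINT y:{0..1}|lborel. f y) = K * measure lborel ?I"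
    unfolding set_lebesgue_integral_def split using int null by simp
qed

lemma set_integral_tie_share:
  fixes S :: "real \<Rightarrow> nat set"
  assumes inside: "\<And>y. y \<in> {0..1} \<Longrightarrow> u < y \<Longrightarrow> y < v \<Longrightarrow> S y = C" and "i \<in> C"
    and outside: "\<And>y. y \<in> {0..1} \<Longrightarrow> y < u \<or> v < y \<Longrightarrow> i \<notin> S y"
  shows "set_integrable lborel {0..1} (\<lambda>y. if i \<in> S y then 1 / real (card (S y)) else 0)"
    and "(LINT y:{0..1}|lborel. if i \<in> S y then 1 / real (card (S y)) else 0)
      = measure lborel ({u<..<v} \<inter> {0..1}) / card C"
proof -
  let ?share = "\<lambda>y. if i \<in> S y then 1 / real (card (S y)) else 0"
  have "?share y = 1 / card C" if "y \<in> {0..1}" "u < y" "y < v" for y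
    using inside[OF that] \<open>i \<in> C\<close> by simp
  moreover have "?share y = 0" if "y \<in> {0..1}" "y < u \<or> v < y" for y
    using outside[OF that] by simp
  ultimately show "set_integrable lborel {0..1} ?share"
    and "(LINT y:{0..1}|lborel. ?share y) = measure lborel ({u<..<v} \<inter> {0..1}) / card C"
    using set_integral_step_function[of u v ?share "1 / card C"] by auto
qed

definition cohort :: "nat \<Rightarrow> (nat \<Rightarrow> real) \<Rightarrow> real \<Rightarrow> nat set" where
  "cohort m x p = {k. k < m \<and> x k = p}"

lemma card_cohort: "card (cohort m x p) = mult_at m x p"
  by (simp add: cohort_def mult_at_def)

lemma closest_set_eq_cohort:
  assumes "i < m" and "\<And>k. k < m \<Longrightarrow> z k \<noteq> z i \<Longrightarrow> \<bar>z i - y\<bar> < \<bar>z k - y\<bar>"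
  shows "closest_set m z y = cohort m z (z i)"
proof (intro set_eqI iffI)
  fix j assume "j \<in> closest_set m z y"
  then have "j < m" "\<bar>z j - y\<bar> \<le> \<bar>z i - y\<bar>"
    using \<open>i < m\<close> by (auto simp: closest_set_def)
  then show "j \<in> cohort m z (z i)"
    using assms(2)[of j] by (force simp: cohort_def)
next
  fix j assume j: "j \<in> cohort m z (z i)"
  have "\<bar>z j - y\<bar> \<le> \<bar>z k - y\<bar>" if "k < m" for k
    using j assms(2)[OF that] by (cases "z k = z i") (auto simp: cohort_def)
  with j show "j \<in> closest_set m z y"
    by (simp add: closest_set_def cohort_def)
qed

lemma farthest_set_eq_cohort:
  assumes "i < m" and "\<And>k. k < m \<Longrightarrow> z k \<noteq> z i \<Longrightarrow> \<bar>z k - y\<bar> < \<bar>z i - y\<bar>"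
  shows "farthest_set m z y = cohort m z (z i)"
proof (intro set_eqI iffI)
  fix j assume "j \<in> farthest_set m z y"
  then have "j < m" "\<bar>z i - y\<bar> \<le> \<bar>z j - y\<bar>"
    using \<open>i < m\<close> by (auto simp: farthest_set_def)
  then show "j \<in> cohort m z (z i)"
    using assms(2)[of j] by (force simp: cohort_def)
next
  fix j assume j: "j \<in> cohort m z (z i)"
  have "\<bar>z k - y\<bar> \<le> \<bar>z j - y\<bar>" if "k < m" for k
    using j assms(2)[OF that] by (cases "z k = z i") (auto simp: cohort_def)
  with j show "j \<in> farthest_set m z y"
    by (simp add: farthest_set_def cohort_def)
qed

lemma not_in_closest_set: "k < m \<Longrightarrow> \<bar>z k - y\<bar> < \<bar>z i - y\<bar> \<Longrightarrow> i \<notin> closest_set m z y"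
  by (force simp: closest_set_def)

lemma not_in_farthest_set: "k < m \<Longrightarrow> \<bar>z i - y\<bar> < \<bar>z k - y\<bar> \<Longrightarrow> i \<notin> farthest_set m z y"
  by (force simp: farthest_set_def)

lemma bw_score_eq:
  assumes "i < m"
    and first_in: "\<And>y k. y \<in> {0..1} \<Longrightarrow> u < y \<Longrightarrow> y < v \<Longrightarrow> k < m \<Longrightarrow> z k \<noteq> z i
        \<Longrightarrow> \<bar>z i - y\<bar> < \<bar>z k - y\<bar>"
    and first_out: "\<And>y. y \<in> {0..1} \<Longrightarrow> y < u \<or> v < y \<Longrightarrow> \<exists>k<m. \<bar>z k - y\<bar> < \<bar>z i - y\<bar>"
    and last_in: "\<And>y k. y \<in> {0..1} \<Longrightarrow> u' < y \<Longrightarrow> y < v' \<Longrightarrow> k < m \<Longrightarrow> z k \<noteq> z i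
        \<Longrightarrow> \<bar>z k - y\<bar> < \<bar>z i - y\<bar>"
    and last_out: "\<And>y. y \<in> {0..1} \<Longrightarrow> y < u' \<or> v' < y \<Longrightarrow> \<exists>k<m. \<bar>z i - y\<bar> < \<bar>z k - y\<bar>"
  shows "bw_score c m z i = (measure lborel ({u<..<v} \<inter> {0..1})
      - c * measure lborel ({u'<..<v'} \<inter> {0..1})) / mult_at m z (z i)"
proof -
  have i: "i \<in> cohort m z (z i)"
    using \<open>i < m\<close> by (simp add: cohort_def)
  have closest: "closest_set m z y = cohort m z (z i)" if "y \<in> {0..1}" "u < y" "y < v" for y
    by (intro closest_set_eq_cohort \<open>i < m\<close> first_in[OF that])
  have farthest: "farthest_set m z y = cohort m z (z i)" if "y \<in> {0..1}" "u' < y" "y < v'" for y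
    by (intro farthest_set_eq_cohort \<open>i < m\<close> last_in[OF that])
  have first_share: "first_prob m z i
      = (\<lambda>y. if i \<in> closest_set m z y then 1 / real (card (closest_set m z y)) else 0)"
    by (simp add: fun_eq_iff first_prob_def)
  have last_share: "last_prob m z i
      = (\<lambda>y. if i \<in> farthest_set m z y then 1 / real (card (farthest_set m z y)) else 0)"
    by (simp add: fun_eq_iff last_prob_def)
  have not_first: "i \<notin> closest_set m z y" if "y \<in> {0..1}" "y < u \<or> v < y" for y
    using first_out[OF that] not_in_closest_set by blast
  have not_last: "i \<notin> farthest_set m z y" if "y \<in> {0..1}" "y < u' \<or> v' < y" for y
    using last_out[OF that] not_in_farthest_set by blast
  note first = set_integral_tie_share[of u v "closest_set m z", OF closest i not_first,
      folded first_share, unfolded card_cohort]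
  note last = set_integral_tie_share[of u' v' "farthest_set m z", OF farthest i not_last,
      folded last_share, unfolded card_cohort]
  have "bw_score c m z i = (LINT y:{0..1}|lborel. first_prob m z i y)
      - c * (LINT y:{0..1}|lborel. last_prob m z i y)"
    unfolding bw_score_def using first(1) last(1)
    by (simp add: set_integral_diff(2) set_integrable_mult_right)
  then show ?thesis
    using first(2) last(2) by (simp add: diff_divide_distrib)
qed

lemma bw_score_interior:
  assumes "i < m" "0 \<le> a" "a < z i" "z i < b" "b \<le> 1"
    and "a \<in> z ` {..<m}" "b \<in> z ` {..<m}"
    and gap: "\<And>k. k < m \<Longrightarrow> z k = z i \<or> z k \<le> a \<or> b \<le> z k"
  shows "bw_score c m z i = (b - a) / (2 * real (mult_at m z (z i)))"
proof -
  obtain ka kb where ka: "ka < m" "z ka = a" and kb: "kb < m" "z kb = b"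
    using assms(6,7) by auto
  let ?u = "(a + z i) / 2" and ?v = "(z i + b) / 2"
  \<comment> \<open>An interior position is never ranked last.\<close>
  have "bw_score c m z i = (measure lborel ({?u<..<?v} \<inter> {0..1})
      - c * measure lborel ({0<..<0::real} \<inter> {0..1})) / mult_at m z (z i)"
  proof (rule bw_score_eq[OF \<open>i < m\<close>])
    show "\<bar>z i - y\<bar> < \<bar>z k - y\<bar>" if "?u < y" "y < ?v" "k < m" "z k \<noteq> z i" for y k
    proof -
      have "z k \<le> a \<or> b \<le> z k"
        using gap[OF \<open>k < m\<close>] \<open>z k \<noteq> z i\<close> by blast
      then show ?thesis using that(1,2) assms(3,4) by (auto simp: abs_if)
    qed
    show "\<exists>k<m. \<bar>z k - y\<bar> < \<bar>z i - y\<bar>" if "y < ?u \<or> ?v < y" for y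
      using that
    proof
      assume "y < ?u"
      then show ?thesis using ka assms(3) by (intro exI[of _ ka]) (auto simp: abs_if)
    next
      assume "?v < y"
      then show ?thesis using kb assms(4) by (intro exI[of _ kb]) (auto simp: abs_if)
    qed
    show "\<exists>k<m. \<bar>z i - y\<bar> < \<bar>z k - y\<bar>" for y
    proof (cases "y \<le> z i")
      case True
      then show ?thesis using kb assms(4) by (intro exI[of _ kb]) (auto simp: abs_if)
    next
      case False
      then show ?thesis using ka assms(3) by (intro exI[of _ ka]) (auto simp: abs_if)
    qed
  qed auto
  moreover have "{?u<..<?v} \<inter> {0..1} = {?u<..<?v}"
    using assms(2-5) by auto
  moreover have "measure lborel {?u<..<?v} = (b - a) / 2"
    using assms(3,4) by (simp add: field_simps)
  ultimately show ?thesis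
    by simp
qed

lemma bw_score_leftmost:
  assumes "i < m" "0 \<le> z i" "z i < b" "b \<le> hi" "hi \<le> 1"
    and "b \<in> z ` {..<m}" "hi \<in> z ` {..<m}"
    and gap: "\<And>k. k < m \<Longrightarrow> z k = z i \<or> b \<le> z k \<and> z k \<le> hi"
  shows "bw_score c m z i = ((z i + b) / 2 - c * (1 - (z i + hi) / 2)) / mult_at m z (z i)"
proof -
  obtain kb kh where kb: "kb < m" "z kb = b" and kh: "kh < m" "z kh = hi"
    using assms(6,7) by auto
  let ?v = "(z i + b) / 2" and ?u' = "(z i + hi) / 2"
  have "bw_score c m z i = (measure lborel ({-1<..<?v} \<inter> {0..1})
      - c * measure lborel ({?u'<..<2} \<inter> {0..1})) / mult_at m z (z i)"
  proof (rule bw_score_eq[OF \<open>i < m\<close>])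
    show "\<bar>z i - y\<bar> < \<bar>z k - y\<bar>" if "y \<in> {0..1}" "y < ?v" "k < m" "z k \<noteq> z i" for y k
    proof -
      have "b \<le> z k"
        using gap[OF \<open>k < m\<close>] \<open>z k \<noteq> z i\<close> by blast
      then show ?thesis using that(2) assms(3) by (auto simp: abs_if)
    qed
    show "\<exists>k<m. \<bar>z k - y\<bar> < \<bar>z i - y\<bar>" if "y \<in> {0..1}" "y < -1 \<or> ?v < y" for y
      using that kb assms(3) by (intro exI[of _ kb]) (auto simp: abs_if)
    show "\<bar>z k - y\<bar> < \<bar>z i - y\<bar>" if "?u' < y" "k < m" "z k \<noteq> z i" for y k
    proof -
      have "b \<le> z k" "z k \<le> hi"
        using gap[OF \<open>k < m\<close>] \<open>z k \<noteq> z i\<close> by blast+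
      then show ?thesis using that(1) assms(3) by (auto simp: abs_if)
    qed
    show "\<exists>k<m. \<bar>z i - y\<bar> < \<bar>z k - y\<bar>" if "y \<in> {0..1}" "y < ?u' \<or> 2 < y" for y
      using that kh assms(3,4) by (intro exI[of _ kh]) (auto simp: abs_if)
  qed
  moreover have "{-1<..<?v} \<inter> {0..1} = {0..<?v}" "{?u'<..<2} \<inter> {0..1} = {?u'<..1}"
    using assms(2-5) by auto
  moreover have "measure lborel {?u'<..1} = 1 - ?u'"
    using assms(3-5) by (intro measure_lborel_Ioc) simp
  ultimately show ?thesis
    using assms(2,3) by simp
qed

lemma bw_score_reflect: "bw_score c m (\<lambda>k. 1 - x k) i = bw_score c m x i"
proof -
  let ?h = "\<lambda>y. first_prob m x i y - c * last_prob m x i y"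
  have "closest_set m (\<lambda>k. 1 - x k) y = closest_set m x (1 - y)"
      "farthest_set m (\<lambda>k. 1 - x k) y = farthest_set m x (1 - y)" for y
  proof -
    have "\<bar>(1 - a) - y\<bar> = \<bar>a - (1 - y)\<bar>" for a :: real
      by arith
    then show "closest_set m (\<lambda>k. 1 - x k) y = closest_set m x (1 - y)"
        "farthest_set m (\<lambda>k. 1 - x k) y = farthest_set m x (1 - y)"
      unfolding closest_set_def farthest_set_def by simp_all
  qed
  then have reflect: "first_prob m (\<lambda>k. 1 - x k) i y - c * last_prob m (\<lambda>k. 1 - x k) i y
      = ?h (1 - y)" for y
    by (simp add: first_prob_def last_prob_def)
  have unit: "indicator {0..1::real} (1 - y) = (indicator {0..1} y :: real)" for y
    by (auto simp: indicator_def)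
  have "bw_score c m x i = (\<integral>y. indicator {0..1} y *\<^sub>R ?h y \<partial>lborel)"
    by (simp add: bw_score_def set_lebesgue_integral_def)
  also have "\<dots> = \<bar>-1\<bar> *\<^sub>R (\<integral>y. indicator {0..1} (1 + (-1) * y) *\<^sub>R ?h (1 + (-1) * y) \<partial>lborel)"
    by (rule lborel_integral_real_affine) simp
  also have "\<dots> = bw_score c m (\<lambda>k. 1 - x k) i"
    by (simp add: bw_score_def set_lebesgue_integral_def reflect unit)
  finally show ?thesis ..
qed

lemma bw_nash_eq_reflect:
  assumes "bw_nash_eq c m x"
  shows "bw_nash_eq c m (\<lambda>k. 1 - x k)"
  unfolding bw_nash_eq_def is_profile_def
proof (intro conjI allI impI ballI)
  fix i assume "i < m"
  then show "1 - x i \<in> {0..1}"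
    using assms by (auto simp: bw_nash_eq_def is_profile_def)
next
  fix i t assume "i < m" "t \<in> {0..1::real}"
  then have "bw_score c m (x(i := 1 - t)) i \<le> bw_score c m x i"
    using assms by (auto simp: bw_nash_eq_def)
  moreover have "(\<lambda>k. 1 - x k)(i := t) = (\<lambda>k. 1 - (x(i := 1 - t)) k)"
    by auto
  ultimately show "bw_score c m ((\<lambda>k. 1 - x k)(i := t)) i \<le> bw_score c m (\<lambda>k. 1 - x k) i"
    by (metis bw_score_reflect)
qed

lemma mult_at_reflect: "mult_at m (\<lambda>k. 1 - x k) (1 - p) = mult_at m x p"
  by (simp add: mult_at_def)

lemma bw_nash_eq_in_unit: "bw_nash_eq c m x \<Longrightarrow> k < m \<Longrightarrow> x k \<in> {0..1}"
  by (simp add: bw_nash_eq_def is_profile_def)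

lemma bw_nash_eq_deviation:
  "bw_nash_eq c m x \<Longrightarrow> i < m \<Longrightarrow> t \<in> {0..1} \<Longrightarrow> bw_score c m (x(i := t)) i \<le> bw_score c m x i"
  by (simp add: bw_nash_eq_def)

lemma mult_at_le_1_iff: "mult_at m x p \<le> 1 \<longleftrightarrow> (\<forall>j<m. \<forall>k<m. x j = p \<longrightarrow> x k = p \<longrightarrow> j = k)"
  unfolding mult_at_def One_nat_def by (subst card_le_Suc0_iff_eq) auto

lemma mult_at_eq_1:
  assumes "i < m" and "\<And>k. k < m \<Longrightarrow> k \<noteq> i \<Longrightarrow> x k \<noteq> x i"
  shows "mult_at m x (x i) = 1"
proof -
  have "{k. k < m \<and> x k = x i} = {i}"
    using assms by auto
  then show ?thesis
    by (simp add: mult_at_def)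
qed

lemma next_position:
  fixes x :: "nat \<Rightarrow> real"
  assumes "\<exists>k<m. p < x k"
  obtains b where "b \<in> x ` {..<m}" "p < b" "\<And>k. k < m \<Longrightarrow> p < x k \<Longrightarrow> b \<le> x k"
proof
  let ?B = "{y \<in> x ` {..<m}. p < y}"
  have fin: "finite ?B"
    by simp
  have "?B \<noteq> {}"
    using assms by auto
  then show "Min ?B \<in> x ` {..<m}" "p < Min ?B"
    using Min_in[OF fin] by auto
  show "Min ?B \<le> x k" if "k < m" "p < x k" for k
    using fin that by auto
qed

lemma prev_position:
  fixes x :: "nat \<Rightarrow> real"
  assumes "\<exists>k<m. x k < p"
  obtains a where "a \<in> x ` {..<m}" "a < p" "\<And>k. k < m \<Longrightarrow> x k < p \<Longrightarrow> x k \<le> a"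
proof
  let ?A = "{y \<in> x ` {..<m}. y < p}"
  have fin: "finite ?A"
    by simp
  have "?A \<noteq> {}"
    using assms by auto
  then show "Max ?A \<in> x ` {..<m}" "Max ?A < p"
    using Max_in[OF fin] by auto
  show "x k \<le> Max ?A" if "k < m" "x k < p" for k
    using fin that by auto
qed

lemma half_gap_le_bw_score:
  assumes nash: "bw_nash_eq c m x" and "i < m" "a < b"
    and a: "a \<in> x ` ({..<m} - {i})" and b: "b \<in> x ` ({..<m} - {i})"
    and gap: "\<And>k. k < m \<Longrightarrow> k \<noteq> i \<Longrightarrow> x k \<le> a \<or> b \<le> x k"
  shows "(b - a) / 2 \<le> bw_score c m x i"
proof -
  let ?t = "(a + b) / 2"
  let ?z = "x(i := ?t)"
  have "0 \<le> a" "b \<le> 1"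
    using a b bw_nash_eq_in_unit[OF nash] by auto
  have "mult_at m ?z (?z i) = 1"
    using \<open>i < m\<close> gap \<open>a < b\<close> by (intro mult_at_eq_1) force+
  moreover have "bw_score c m ?z i = (b - a) / (2 * real (mult_at m ?z (?z i)))"
  proof (rule bw_score_interior)
    show "a \<in> ?z ` {..<m}" "b \<in> ?z ` {..<m}"
      using a b by force+
    show "?z k = ?z i \<or> ?z k \<le> a \<or> b \<le> ?z k" if "k < m" for k
      using gap[OF that] by (cases "k = i") auto
  qed (use assms \<open>0 \<le> a\<close> \<open>b \<le> 1\<close> in auto)
  moreover have "?t \<in> {0..1}"
    using \<open>0 \<le> a\<close> \<open>b \<le> 1\<close> \<open>a < b\<close> by auto
  ultimately show ?thesis
    using bw_nash_eq_deviation[OF nash \<open>i < m\<close>, of ?t] by simp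
qed

lemma lone_leftmost_le_bw_score:
  assumes nash: "bw_nash_eq c m x" and "i < m" "0 \<le> t" "t < b"
    and b: "b \<in> x ` ({..<m} - {i})" and hi: "hi \<in> x ` ({..<m} - {i})"
    and gap: "\<And>k. k < m \<Longrightarrow> k \<noteq> i \<Longrightarrow> b \<le> x k \<and> x k \<le> hi"
  shows "(t + b) / 2 - c * (1 - (t + hi) / 2) \<le> bw_score c m x i"
proof -
  let ?z = "x(i := t)"
  have "b \<le> hi" "hi \<le> 1"
    using b hi gap bw_nash_eq_in_unit[OF nash] by auto
  have "mult_at m ?z (?z i) = 1"
    using \<open>i < m\<close> gap \<open>t < b\<close> by (intro mult_at_eq_1) force+
  moreover have "bw_score c m ?z i
      = ((?z i + b) / 2 - c * (1 - (?z i + hi) / 2)) / mult_at m ?z (?z i)"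
  proof (rule bw_score_leftmost)
    show "b \<in> ?z ` {..<m}" "hi \<in> ?z ` {..<m}"
      using b hi by force+
    show "?z k = ?z i \<or> b \<le> ?z k \<and> ?z k \<le> hi" if "k < m" for k
      using gap[OF that] by (cases "k = i") auto
  qed (use assms \<open>b \<le> hi\<close> \<open>hi \<le> 1\<close> in auto)
  moreover have "t \<in> {0..1}"
    using assms \<open>b \<le> hi\<close> \<open>hi \<le> 1\<close> by auto
  ultimately show ?thesis
    using bw_nash_eq_deviation[OF nash \<open>i < m\<close>, of t] by simp
qed

lemma mult_at_interior_le_2:
  assumes nash: "bw_nash_eq c m x" and "i < m"
    and a: "a \<in> x ` {..<m}" "a < x i" and b: "b \<in> x ` {..<m}" "x i < b"
    and gap: "\<And>k. k < m \<Longrightarrow> x k = x i \<or> x k \<le> a \<or> b \<le> x k"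
  shows "mult_at m x (x i) \<le> 2"
proof (cases "mult_at m x (x i) \<le> 1")
  case False
  then obtain j where j: "j < m" "j \<noteq> i" "x j = x i"
    using \<open>i < m\<close> unfolding mult_at_le_1_iff by blast
  let ?N = "real (mult_at m x (x i))"
  have score: "bw_score c m x i = (b - a) / (2 * ?N)"
    using a b bw_nash_eq_in_unit[OF nash] by (intro bw_score_interior \<open>i < m\<close> gap) auto
  have a': "a \<in> x ` ({..<m} - {i})" and b': "b \<in> x ` ({..<m} - {i})"
    using a b by force+
  have p': "x i \<in> x ` ({..<m} - {i})"
    using j by (auto intro!: image_eqI[of _ _ j])
  have "(x i - a) / 2 \<le> bw_score c m x i"
    using gap b(2) by (intro half_gap_le_bw_score[OF nash \<open>i < m\<close> a(2) a' p']) force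
  moreover have "(b - x i) / 2 \<le> bw_score c m x i"
    using gap a(2) by (intro half_gap_le_bw_score[OF nash \<open>i < m\<close> b(2) p' b']) force
  ultimately have half: "(b - a) / 2 \<le> (b - a) / ?N"
    unfolding score by (simp add: field_simps)
  have "\<not> 2 < ?N"
  proof
    assume "2 < ?N"
    then have "(b - a) / ?N < (b - a) / 2"
      using a(2) b(2) by (intro divide_strict_left_mono) auto
    with half show False
      by linarith
  qed
  then show ?thesis
    by simp
qed simp

lemma mult_at_between_le_2:
  assumes nash: "bw_nash_eq c m x" and "i < m"
    and "\<exists>k<m. x k < x i" and "\<exists>k<m. x i < x k"
  shows "mult_at m x (x i) \<le> 2"
proof -
  obtain a where a: "a \<in> x ` {..<m}" "a < x i" "\<And>k. k < m \<Longrightarrow> x k < x i \<Longrightarrow> x k \<le> a"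
    using prev_position[OF assms(3)] by blast
  obtain b where b: "b \<in> x ` {..<m}" "x i < b" "\<And>k. k < m \<Longrightarrow> x i < x k \<Longrightarrow> b \<le> x k"
    using next_position[OF assms(4)] by blast
  show ?thesis
  proof (rule mult_at_interior_le_2[OF nash \<open>i < m\<close> a(1,2) b(1,2)])
    show "x k = x i \<or> x k \<le> a \<or> b \<le> x k" if "k < m" for k
      using a(3)[OF that] b(3)[OF that] by linarith
  qed
qed

locale leftmost_cohort =
  fixes c :: real and m :: nat and x :: "nat \<Rightarrow> real" and i :: nat and b hi :: real
  assumes c_nonneg: "0 \<le> c" and nash: "bw_nash_eq c m x" and i: "i < m"
    and b: "b \<in> x ` {..<m}" "x i < b"
    and hi: "hi \<in> x ` {..<m}" "\<And>k. k < m \<Longrightarrow> x k \<le> hi"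
    and gap: "\<And>k. k < m \<Longrightarrow> x k = x i \<or> b \<le> x k"
begin

lemma bounds: "0 \<le> x i" "b \<le> hi" "hi \<le> 1"
  using bw_nash_eq_in_unit[OF nash] i b hi by auto

lemma b_other: "b \<in> x ` ({..<m} - {i})" and hi_other: "hi \<in> x ` ({..<m} - {i})"
  using b hi bounds by force+

lemma score: "bw_score c m x i = ((x i + b) / 2 - c * (1 - (x i + hi) / 2)) / mult_at m x (x i)"
  using bounds b hi gap by (intro bw_score_leftmost i) auto

lemma mult_ge_2: "2 \<le> mult_at m x (x i)"
proof (rule ccontr)
  assume "\<not> 2 \<le> mult_at m x (x i)"
  then have "mult_at m x (x i) \<le> 1"
    by simp
  then have alone: "x k \<noteq> x i" if "k < m" "k \<noteq> i" for k
    using that i unfolding mult_at_le_1_iff by blast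
  then have one: "mult_at m x (x i) = 1"
    using i by (intro mult_at_eq_1) auto
  let ?t = "(x i + b) / 2"
  \<comment> \<open>Alone at the far left, i gains first places and loses no last places by moving right.\<close>
  have "(?t + b) / 2 - c * (1 - (?t + hi) / 2) \<le> bw_score c m x i"
    using bounds b(2) gap alone hi(2)
    by (intro lone_leftmost_le_bw_score[OF nash i] b_other hi_other) force+
  then have "(?t + b) / 2 - c * (1 - (?t + hi) / 2) \<le> (x i + b) / 2 - c * (1 - (x i + hi) / 2)"
    by (simp add: score one)
  moreover have "c * (1 - (?t + hi) / 2) \<le> c * (1 - (x i + hi) / 2)"
    using c_nonneg b(2) by (intro mult_left_mono) auto
  ultimately show False
    using b(2) by argo
qed

lemma mult_le_2: "mult_at m x (x i) \<le> 2"
proof (rule ccontr)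
  assume "\<not> mult_at m x (x i) \<le> 2"
  then have N: "3 \<le> real (mult_at m x (x i))"
    by simp
  then have "\<not> mult_at m x (x i) \<le> 1"
    by simp
  then obtain j where j: "j < m" "j \<noteq> i" "x j = x i"
    using i unfolding mult_at_le_1_iff by blast
  have lo_other: "x i \<in> x ` ({..<m} - {i})"
    using j by (auto intro!: image_eqI[of _ _ j])
  define A where "A = c * (1 - (x i + hi) / 2)"
  define S where "S = (x i + b) / 2 - A"
  define Q where "Q = bw_score c m x i"
  have Q: "Q = S / mult_at m x (x i)"
    unfolding Q_def S_def A_def by (rule score)
  have right: "(b - x i) / 2 \<le> Q"
    unfolding Q_def using gap by (intro half_gap_le_bw_score[OF nash i b(2) lo_other b_other]) force
  have Q_pos: "0 < Q"
    using b(2) right by (metis less_le_trans half_gt_zero diff_gt_0_iff_gt)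
  then have "0 < S"
    using N Q by (simp add: zero_less_divide_iff)
  then have Q_le: "Q \<le> S / 3"
    unfolding Q using N by (intro frac_le) auto
  have A: "0 \<le> A"
    unfolding A_def using c_nonneg bounds hi(2)[OF i] by simp
  define e where "e = min (x i) (S / (3 * (1 + c)))"
  have "0 < 1 + c"
    using c_nonneg by simp
  have e: "0 \<le> e" "e \<le> x i" "e * (1 + c) \<le> S / 3"
  proof -
    show "0 \<le> e" "e \<le> x i"
      using bounds \<open>0 < S\<close> \<open>0 < 1 + c\<close> by (auto simp: e_def)
    have "e \<le> S / (3 * (1 + c))"
      by (simp add: e_def)
    then show "e * (1 + c) \<le> S / 3"
      using \<open>0 < 1 + c\<close> by (simp add: pos_le_divide_eq field_simps)
  qed
  \<comment> \<open>Unless i is already at 0, moving alone slightly to the left keeps almost all of i's score.\<close>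
  have left: "x i - A - e * (1 + c) / 2 \<le> Q"
  proof (cases "x i = 0")
    case True
    then show ?thesis
      using A Q_pos e(1,2) by simp
  next
    case False
    then have "0 < e"
      using bounds \<open>0 < S\<close> c_nonneg by (simp add: e_def)
    let ?t = "x i - e"
    have "(?t + x i) / 2 - c * (1 - (?t + hi) / 2) \<le> Q"
      unfolding Q_def using bounds b(2) gap hi(2) e \<open>0 < e\<close>
      by (intro lone_leftmost_le_bw_score[OF nash i] lo_other hi_other) force+
    moreover have "(?t + x i) / 2 - c * (1 - (?t + hi) / 2) = x i - A - e * (1 + c) / 2"
      by (simp add: A_def field_simps)
    ultimately show ?thesis
      by simp
  qed
  from left right Q_le e(3) \<open>0 < S\<close> show False
    unfolding S_def by argo
qed

end

lemma mult_at_leftmost_eq_2: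
  assumes "0 \<le> c" "bw_nash_eq c m x" "i < m"
    and lo: "\<And>k. k < m \<Longrightarrow> x i \<le> x k" and "\<exists>k<m. x i < x k"
  shows "mult_at m x (x i) = 2"
proof -
  obtain b where b: "b \<in> x ` {..<m}" "x i < b" "\<And>k. k < m \<Longrightarrow> x i < x k \<Longrightarrow> b \<le> x k"
    using next_position[OF assms(5)] by blast
  let ?hi = "Max (x ` {..<m})"
  have "?hi \<in> x ` {..<m}" "\<And>k. k < m \<Longrightarrow> x k \<le> ?hi"
    using \<open>i < m\<close> by (auto intro: Max_in)
  moreover have "x k = x i \<or> b \<le> x k" if "k < m" for k
    using lo[OF that] b(3)[OF that] by force
  ultimately interpret leftmost_cohort c m x i b ?hi
    using assms b by unfold_locales auto
  show ?thesis
    using mult_ge_2 mult_le_2 by simp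
qed

lemma mult_at_rightmost_eq_2:
  assumes "0 \<le> c" "bw_nash_eq c m x" "i < m"
    and "\<And>k. k < m \<Longrightarrow> x k \<le> x i" and "\<exists>k<m. x k < x i"
  shows "mult_at m x (x i) = 2"
proof -
  have "mult_at m (\<lambda>k. 1 - x k) (1 - x i) = 2"
    using mult_at_leftmost_eq_2[of c m "\<lambda>k. 1 - x k" i] assms bw_nash_eq_reflect by force
  then show ?thesis
    by (simp add: mult_at_reflect)
qed

lemma mult_at_add_le:
  assumes "p \<noteq> q"
  shows "mult_at m x p + mult_at m x q \<le> m"
proof -
  have "mult_at m x p + mult_at m x q = card ({k. k < m \<and> x k = p} \<union> {k. k < m \<and> x k = q})"
    unfolding mult_at_def using assms by (subst card_Un_disjoint) auto
  also have "\<dots> \<le> card {..<m}"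
    by (intro card_mono) auto
  finally show ?thesis
    by simp
qed

theorem lemma4:
  fixes c :: real and m :: nat and x :: "nat \<Rightarrow> real"
  assumes "c \<ge> 0" and "m \<ge> 2"
    and "bw_nash_eq c m x" and "non_convergent m x"
  shows "(\<forall>p \<in> x ` {..<m}. mult_at m x p \<le> 2)
       \<and> mult_at m x (Min (x ` {..<m})) = 2
       \<and> mult_at m x (Max (x ` {..<m})) = 2
       \<and> m \<noteq> 3"
proof -
  let ?lo = "Min (x ` {..<m})" and ?hi = "Max (x ` {..<m})"
  have positions: "finite (x ` {..<m})" "x ` {..<m} \<noteq> {}"
    using \<open>m \<ge> 2\<close> by (auto simp: lessThan_empty_iff)
  obtain il ih where il: "il < m" "x il = ?lo" and ih: "ih < m" "x ih = ?hi"
    using Min_in[OF positions] Max_in[OF positions] by auto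
  have bounds: "?lo \<le> x k" "x k \<le> ?hi" if "k < m" for k
    using that by auto
  obtain j k where "j < m" "k < m" "x j \<noteq> x k"
    using \<open>non_convergent m x\<close> unfolding non_convergent_def by blast
  then have "?lo < ?hi"
    using bounds[of j] bounds[of k] by argo
  have "mult_at m x (x il) = 2"
    using \<open>?lo < ?hi\<close> il ih bounds
    by (intro mult_at_leftmost_eq_2[OF assms(1,3) il(1)] exI[of _ ih]) auto
  moreover have "mult_at m x (x ih) = 2"
    using \<open>?lo < ?hi\<close> il ih bounds
    by (intro mult_at_rightmost_eq_2[OF assms(1,3) ih(1)] exI[of _ il]) auto
  ultimately have lo: "mult_at m x ?lo = 2" and hi: "mult_at m x ?hi = 2"
    using il ih by simp_all
  have "mult_at m x (x i) \<le> 2" if "i < m" for i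
    using mult_at_between_le_2[OF assms(3) that] lo hi il ih bounds[OF that]
    by (cases "x i = ?lo"; cases "x i = ?hi") force+
  moreover have "m \<noteq> 3"
    using mult_at_add_le[of ?lo ?hi m x] \<open>?lo < ?hi\<close> lo hi by simp
  ultimately show ?thesis
    using lo hi by blast
qed

end
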